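(* Let $\mu>0$, $u_a\in\mathbb{R}$, $\alpha_\pm\ge0$, $u_-<u_+$, with Riemann data $(\alpha_0,u_0)=(\alpha_-,u_-)$ for $x<0$, $(\alpha_+,u_+)$ for $x>0$. With $u_l(t)=u_a+(u_--u_a)e^{-\mu t}$, $u_r(t)=u_a+(u_+-u_a)e^{-\mu t}$, $X_1(t)=u_at+\frac{(u_a-u_-)(e^{-\mu t}-1)}{\mu}$, $X_2(t)=u_at+\frac{(u_a-u_+)(e^{-\mu t}-1)}{\mu}$, $\overline u(x,t)=u_a+\frac{\mu(x-u_at)}{e^{\mu t}-1}$, the function $(\alpha,u)=(\alpha_-,u_l(t))$ for $x<X_1(t)$, $(0,\overline u)$ for $X_1(t)\le x\le X_2(t)$, $(\alpha_+,u_r(t))$ for $x>X_2(t)$ is a weak solution of the Eulerian droplet model with these data (a two-contact-discontinuity containing a vacuum state).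
   Context: The Eulerian droplet model: $\partial_t\alpha+\partial_x(\alpha u)=0$, $\partial_t(\alpha u)+\partial_x(\alpha u^2)=\mu\alpha(u_a-u)$. Weak solution: for all $\psi\in\mathcal{C}_0^\infty(\mathbb{R}\times[0,\infty))$, $\int_0^\infty\int(\alpha\psi_t+\alpha u\psi_x)dx\,dt=-\int\alpha_0\psi(x,0)dx$ and $\int_0^\infty\int(\alpha u\psi_t+\alpha u^2\psi_x+\mu\alpha(u_a-u)\psi)dx\,dt=-\int\alpha_0u_0\psi(x,0)dx$. *)

theory Defs
  imports "HOL-Analysis.Analysis"
begin

definition partial_x :: "(real \<times> real \<Rightarrow> real) \<Rightarrow> real \<times> real \<Rightarrow> real" where
  "partial_x f p = deriv (\<lambda>y. f (y, snd p)) (fst p)"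

definition partial_t :: "(real \<times> real \<Rightarrow> real) \<Rightarrow> real \<times> real \<Rightarrow> real" where
  "partial_t f p = deriv (\<lambda>s. f (fst p, s)) (snd p)"

fun iter_partial :: "bool list \<Rightarrow> (real \<times> real \<Rightarrow> real) \<Rightarrow> real \<times> real \<Rightarrow> real" where
  "iter_partial [] f = f"
| "iter_partial (d # ds) f = (if d then partial_x else partial_t) (iter_partial ds f)"

definition smooth2 :: "(real \<times> real \<Rightarrow> real) \<Rightarrow> bool" where
  "smooth2 f \<longleftrightarrow> (\<forall>ds. continuous_on UNIV (iter_partial ds f)
      \<and> (\<forall>x t. (\<lambda>y. iter_partial ds f (y, t)) differentiable (at x))
      \<and> (\<forall>x t. (\<lambda>s. iter_partial ds f (x, s)) differentiable (at t)))"

text \<open>Test functions in C_0^infinity(R x [0,infinity)): restrictions to the closed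
  upper half plane of smooth compactly supported functions on the plane.\<close>
definition test_fun :: "(real \<times> real \<Rightarrow> real) \<Rightarrow> bool" where
  "test_fun \<psi> \<longleftrightarrow> smooth2 \<psi> \<and> bounded {p. \<psi> p \<noteq> 0}"

definition weak_solution ::
  "real \<Rightarrow> real \<Rightarrow> (real \<Rightarrow> real) \<Rightarrow> (real \<Rightarrow> real)
    \<Rightarrow> (real \<times> real \<Rightarrow> real) \<Rightarrow> (real \<times> real \<Rightarrow> real) \<Rightarrow> bool" where
  "weak_solution \<mu> ua \<alpha>0 u0 \<alpha> u \<longleftrightarrow>
    (\<forall>\<psi>. test_fun \<psi> \<longrightarrow>
      set_lebesgue_integral lborel (UNIV \<times> {0..})
        (\<lambda>p. \<alpha> p * partial_t \<psi> p + \<alpha> p * u p * partial_x \<psi> p)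
        = - (LINT x | lborel. \<alpha>0 x * \<psi> (x, 0))
    \<and> set_lebesgue_integral lborel (UNIV \<times> {0..})
        (\<lambda>p. \<alpha> p * u p * partial_t \<psi> p + \<alpha> p * (u p)\<^sup>2 * partial_x \<psi> p
              + \<mu> * \<alpha> p * (ua - u p) * \<psi> p)
        = - (LINT x | lborel. \<alpha>0 x * u0 x * \<psi> (x, 0)))"

end

theory Submission
  imports Defs
begin

text \<open>On each of the two constant-density regions the solution is transported along the
  contact curve \<open>X\<close> with speed \<open>u\<close>, where \<open>X' = u\<close> and \<open>u' = \<mu>(u\<^sub>a - u)\<close>; in the vacuum
  region between them \<open>\<alpha> = 0\<close>, so it contributes nothing and \<open>ubar\<close> is irrelevant.
  For a region \<open>{x - X(t) \<in> A}\<close> and a weight \<open>g(t)\<close>, the integrand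
  \<open>g \<psi>\<^sub>t + g X' \<psi>\<^sub>x + g' \<psi>\<close> is the \<open>t\<close>-derivative of \<open>g(t) \<psi>(y + X(t), t)\<close> in the sheared
  coordinates \<open>x = y + X(t)\<close>. Since shearing preserves Lebesgue measure, Fubini and the
  fundamental theorem of calculus along each line \<open>y = const\<close> give \<open>-g(0) \<integral>\<^sub>A \<psi>(y, 0) dy\<close>.
  Taking \<open>g = 1\<close> and \<open>g = u\<close> yields the two weak equations.\<close>

lemma smooth2_continuous:
  assumes "smooth2 \<psi>"
  shows "continuous_on UNIV \<psi>" "continuous_on UNIV (partial_x \<psi>)"
    "continuous_on UNIV (partial_t \<psi>)"
proof -
  have "continuous_on UNIV (iter_partial ds \<psi>)" for ds
    using assms unfolding smooth2_def by blast
  from this[of "[]"] this[of "[True]"] this[of "[False]"] show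
    "continuous_on UNIV \<psi>" "continuous_on UNIV (partial_x \<psi>)" "continuous_on UNIV (partial_t \<psi>)"
    by simp_all
qed

lemma continuous_on_smooth2_slice:
  assumes "smooth2 \<psi>"
  shows "continuous_on UNIV (\<lambda>x. \<psi> (x, t))"
  by (rule continuous_on_compose2[OF smooth2_continuous(1)[OF assms]]) (auto intro: continuous_intros)

lemma smooth2_has_partial_derivatives:
  assumes "smooth2 \<psi>"
  shows "((\<lambda>y. \<psi> (y, t)) has_real_derivative partial_x \<psi> (x, t)) (at x)"
    and "((\<lambda>s. \<psi> (x, s)) has_real_derivative partial_t \<psi> (x, t)) (at t)"
proof -
  have "(\<lambda>y. \<psi> (y, t)) differentiable (at x)" "(\<lambda>s. \<psi> (x, s)) differentiable (at t)"
    using assms unfolding smooth2_def by (metis iter_partial.simps(1))+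
  then show "((\<lambda>y. \<psi> (y, t)) has_real_derivative partial_x \<psi> (x, t)) (at x)"
    "((\<lambda>s. \<psi> (x, s)) has_real_derivative partial_t \<psi> (x, t)) (at t)"
    unfolding partial_x_def partial_t_def by (simp_all add: DERIV_deriv_iff_real_differentiable)
qed

text \<open>Continuity of \<open>\<psi>\<^sub>t\<close> makes \<open>\<psi>\<close> totally differentiable.\<close>

lemma smooth2_has_derivative:
  assumes "smooth2 \<psi>"
  shows "(\<psi> has_derivative (\<lambda>(a, b). partial_x \<psi> q * a + partial_t \<psi> q * b)) (at q)"
proof -
  obtain x y where q: "q = (x, y)" by (cases q)
  have fx: "((\<lambda>a. \<psi> (a, y)) has_derivative (*) (partial_x \<psi> (x, y))) (at x within UNIV)"
    using smooth2_has_partial_derivatives(1)[OF assms]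
    by (simp add: has_field_derivative_def mult.commute)
  have fy: "((\<lambda>b. \<psi> (a, b)) has_derivative
      blinfun_apply (blinfun_mult_right (partial_t \<psi> (a, b)))) (at b within UNIV)" for a b
    using smooth2_has_partial_derivatives(2)[OF assms]
    by (simp add: has_field_derivative_def mult.commute)
  have "continuous_on UNIV (\<lambda>p. blinfun_mult_right (partial_t \<psi> p))"
    by (intro continuous_on_compose2[OF _ smooth2_continuous(3)[OF assms]] linear_continuous_on
        bounded_linear_blinfun_mult_right) auto
  then have cont: "continuous (at (x, y) within UNIV \<times> UNIV)
      (\<lambda>(a, b). blinfun_mult_right (partial_t \<psi> (a, b)))"
    by (simp add: case_prod_beta' continuous_on_eq_continuous_within)
  have "((\<lambda>(a, b). \<psi> (a, b)) has_derivative (\<lambda>(ta, tb). partial_x \<psi> (x, y) * ta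
      + blinfun_apply (blinfun_mult_right (partial_t \<psi> (x, y))) tb)) (at (x, y) within UNIV \<times> UNIV)"
    by (rule has_derivative_partialsI[OF fx fy cont]) auto
  then show ?thesis by (simp add: q)
qed

lemma smooth2_has_derivative_along_curve:
  assumes "smooth2 \<psi>" and "(X has_real_derivative v) (at t)"
  shows "((\<lambda>s. \<psi> (y + X s, s)) has_real_derivative
           partial_t \<psi> (y + X t, t) + v * partial_x \<psi> (y + X t, t)) (at t)"
proof -
  have "((\<lambda>s. y + X s) has_derivative (*) v) (at t)"
    using has_derivative_add[OF has_derivative_const[of y]] assms(2)
    unfolding has_field_derivative_def by simp
  from has_derivative_Pair[OF this has_derivative_ident]
  have "((\<lambda>s. (y + X s, s)) has_derivative (\<lambda>h. (v * h, h))) (at t)" by simp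
  from diff_chain_at[OF this smooth2_has_derivative[OF assms(1)]]
  have "((\<lambda>s. \<psi> (y + X s, s)) has_derivative
      (\<lambda>h. partial_x \<psi> (y + X t, t) * (v * h) + partial_t \<psi> (y + X t, t) * h)) (at t)"
    by (simp add: o_def)
  then show ?thesis unfolding has_field_derivative_def
    by (rule has_derivative_eq_rhs) (auto simp: fun_eq_iff algebra_simps)
qed

lemma test_fun_smooth2: "test_fun \<psi> \<Longrightarrow> smooth2 \<psi>"
  by (simp add: test_fun_def)

lemma test_fun_support:
  assumes "test_fun \<psi>"
  obtains R where "0 \<le> R" "\<And>p. R < norm p \<Longrightarrow> \<psi> p = 0"
    "\<And>p. R < norm p \<Longrightarrow> partial_x \<psi> p = 0" "\<And>p. R < norm p \<Longrightarrow> partial_t \<psi> p = 0"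
proof -
  have sm: "smooth2 \<psi>" by (rule test_fun_smooth2[OF assms])
  have "bounded {p. \<psi> p \<noteq> 0}" using assms by (simp add: test_fun_def)
  then obtain R0 where "\<And>p. \<psi> p \<noteq> 0 \<Longrightarrow> norm p \<le> R0" unfolding bounded_iff by auto
  then have R0: "\<And>p. max R0 0 < norm p \<Longrightarrow> \<psi> p = 0" by force
  have "partial_x \<psi> (x, t) = 0 \<and> partial_t \<psi> (x, t) = 0" if "max R0 0 < norm (x, t)" for x t
  proof
    have o1: "open {y. max R0 0 < norm (y, t)}" and o2: "open {s. max R0 0 < norm (x, s)}"
      by (intro open_Collect_less continuous_intros)+
    have "((\<lambda>y. \<psi> (y, t)) has_real_derivative 0) (at x)"
      by (rule has_field_derivative_transform_within_open[OF DERIV_const o1]) (use R0 that in auto)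
    moreover have "((\<lambda>s. \<psi> (x, s)) has_real_derivative 0) (at t)"
      by (rule has_field_derivative_transform_within_open[OF DERIV_const o2]) (use R0 that in auto)
    ultimately
    show "partial_x \<psi> (x, t) = 0" "partial_t \<psi> (x, t) = 0"
      using smooth2_has_partial_derivatives[OF sm] DERIV_unique by blast+
  qed
  then show ?thesis using R0 by (intro that[of "max R0 0"]) force+
qed

lemma integrable_bounded_support:
  fixes f h :: "'a::euclidean_space \<Rightarrow> real"
  assumes "f \<in> borel_measurable borel" "continuous_on UNIV h" "\<And>x. \<bar>f x\<bar> \<le> \<bar>h x\<bar>"
    "\<And>x. R < norm x \<Longrightarrow> f x = 0"
  shows "integrable lborel f"
proof (rule Bochner_Integration.integrable_bound)
  show "integrable lborel (\<lambda>x. indicator (cball 0 R) x *\<^sub>R h x)"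
    by (rule borel_integrable_compact) (auto intro: continuous_on_subset assms(2))
  show "AE x in lborel. norm (f x) \<le> norm (indicator (cball 0 R) x *\<^sub>R h x)"
    using assms(3,4) by (intro AE_I2) (auto simp: indicator_def mem_cball_0 not_le)
qed (use assms(1) in simp)

lemma integrable_test_fun_initial:
  assumes "test_fun \<psi>" and [measurable]: "A \<in> sets borel"
  shows "integrable lborel (\<lambda>x. indicator A x * \<psi> (x, 0))"
proof -
  obtain R where R: "\<And>p. R < norm p \<Longrightarrow> \<psi> p = 0"
    using test_fun_support[OF assms(1)] by metis
  have cont: "continuous_on UNIV (\<lambda>x. \<psi> (x, 0))"
    by (rule continuous_on_smooth2_slice[OF test_fun_smooth2[OF assms(1)]])
  then have [measurable]: "(\<lambda>x. \<psi> (x, 0)) \<in> borel_measurable borel"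
    by (rule borel_measurable_continuous_onI)
  show ?thesis
  proof (rule integrable_bounded_support[OF _ cont])
    show "(\<lambda>x. indicator A x * \<psi> (x, 0)) \<in> borel_measurable borel" by measurable
    show "\<bar>indicator A x * \<psi> (x, 0)\<bar> \<le> \<bar>\<psi> (x, 0)\<bar>" for x
      by (simp add: indicator_def)
    show "indicator A x * \<psi> (x, 0) = 0" if "R < norm x" for x
      using R[of "(x, 0)"] that by (simp add: norm_Pair)
  qed
qed

lemma integral_test_fun_initial_step:
  assumes tf: "test_fun \<psi>"
  shows "(LINT x|lborel. (if x < 0 then a else b) * \<psi> (x, 0))
    = a * (LINT x|lborel. indicator {..<0} x * \<psi> (x, 0))
      + b * (LINT x|lborel. indicator {0<..} x * \<psi> (x, 0))"
proof -
  have [measurable]: "(\<lambda>x. \<psi> (x, 0)) \<in> borel_measurable borel"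
    by (intro borel_measurable_continuous_onI continuous_on_smooth2_slice test_fun_smooth2[OF tf])
  have "(LINT x|lborel. (if x < 0 then a else b) * \<psi> (x, 0))
      = (LINT x|lborel. a * (indicator {..<0} x * \<psi> (x, 0)) + b * (indicator {0<..} x * \<psi> (x, 0)))"
    by (rule integral_cong_AE; measurable?)
       (use AE_lborel_singleton[of 0] in \<open>auto elim!: eventually_mono simp: indicator_def\<close>)
  then show ?thesis
    using integrable_test_fun_initial[OF tf, of "{..<0}"] integrable_test_fun_initial[OF tf, of "{0<..}"]
    by simp
qed

lemma integrable_halfplane_region:
  fixes h :: "real \<times> real \<Rightarrow> real"
  assumes h: "continuous_on UNIV h" and supp: "\<And>p. 0 \<le> snd p \<Longrightarrow> R < norm p \<Longrightarrow> h p = 0"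
    and X: "continuous_on UNIV X" and [measurable]: "A \<in> sets borel"
  shows "integrable lborel (\<lambda>p. indicator {0..} (snd p) * indicator A (fst p - X (snd p)) * h p)"
proof (rule integrable_bounded_support[OF _ h])
  have [measurable]: "X \<in> borel_measurable borel" "h \<in> borel_measurable (borel \<Otimes>\<^sub>M borel)"
    using borel_measurable_continuous_onI[OF X] borel_measurable_continuous_onI[OF h]
    by (simp_all add: borel_prod)
  have "(\<lambda>p. indicator {0..} (snd p) * indicator A (fst p - X (snd p)) * h p)
      \<in> borel_measurable (borel \<Otimes>\<^sub>M borel)"
    by measurable
  then show "(\<lambda>p. indicator {0..} (snd p) * indicator A (fst p - X (snd p)) * h p)
      \<in> borel_measurable borel"
    by (simp add: borel_prod)
qed (use supp in \<open>auto simp: indicator_def\<close>)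

lemma sheared_support_bounded:
  fixes h :: "real \<times> real \<Rightarrow> real"
  assumes X: "continuous_on UNIV X" and supp: "\<And>p. R < norm p \<Longrightarrow> h p = 0"
  obtains R' where "\<And>p. 0 \<le> snd p \<Longrightarrow> R' < norm p \<Longrightarrow> h (fst p + X (snd p), snd p) = 0"
proof -
  have "compact (X ` {0..R})"
    by (rule compact_continuous_image[OF continuous_on_subset[OF X]]) auto
  then obtain M where "\<forall>x\<in>X ` {0..R}. norm x \<le> M"
    using compact_imp_bounded bounded_iff by metis
  then have M: "\<And>t. t \<in> {0..R} \<Longrightarrow> \<bar>X t\<bar> \<le> M" by auto
  have "h (fst p + X (snd p), snd p) = 0" if "0 \<le> snd p" "2 * \<bar>R\<bar> + M < norm p" for p
  proof (rule ccontr)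
    assume "h (fst p + X (snd p), snd p) \<noteq> 0"
    then have "norm (fst p + X (snd p), snd p) \<le> R" using supp by force
    then have "\<bar>snd p\<bar> \<le> R" "\<bar>fst p + X (snd p)\<bar> \<le> R"
      using norm_snd_le[of "snd p" "fst p + X (snd p)"] norm_fst_le[of "fst p + X (snd p)" "snd p"]
      by auto
    moreover have "\<bar>X (snd p)\<bar> \<le> M" using M that(1) \<open>\<bar>snd p\<bar> \<le> R\<close> by auto
    moreover have "norm p \<le> \<bar>fst p\<bar> + \<bar>snd p\<bar>" using norm_Pair_le[of "fst p" "snd p"] by simp
    ultimately show False using that(2) by linarith
  qed
  then show ?thesis by (rule that)
qed

text \<open>The shear \<open>(y, t) \<mapsto> (y + X(t), t)\<close> preserves Lebesgue measure: by Fubini it is a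
  translation on every horizontal line.\<close>

lemma lborel_integral_shear:
  fixes f :: "real \<times> real \<Rightarrow> real" and X :: "real \<Rightarrow> real"
  assumes "integrable lborel f" and "integrable lborel (\<lambda>p. f (fst p + X (snd p), snd p))"
  shows "(\<integral>p. f (fst p + X (snd p), snd p) \<partial>lborel) = integral\<^sup>L lborel f"
proof -
  have int_f: "integrable (lborel \<Otimes>\<^sub>M lborel) (\<lambda>(x, t). f (x, t))"
    and int_g: "integrable (lborel \<Otimes>\<^sub>M lborel) (\<lambda>(y, t). f (y + X t, t))"
    using assms by (simp_all add: lborel_prod case_prod_beta')
  have "(\<integral>p. f (fst p + X (snd p), snd p) \<partial>lborel) = (\<integral>t. (\<integral>y. f (y + X t, t) \<partial>lborel) \<partial>lborel)"
    using lborel_pair.integral_snd[OF int_g] by (simp add: lborel_prod case_prod_beta')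
  also have "\<dots> = (\<integral>t. (\<integral>x. f (x, t) \<partial>lborel) \<partial>lborel)"
  proof (rule Bochner_Integration.integral_cong[OF refl])
    fix t
    show "(\<integral>y. f (y + X t, t) \<partial>lborel) = (\<integral>x. f (x, t) \<partial>lborel)"
      using lborel_integral_real_affine[of 1 "\<lambda>x. f (x, t)" "X t"] by (simp add: add.commute)
  qed
  also have "\<dots> = integral\<^sup>L lborel f"
    using lborel_pair.integral_snd[OF int_f] by (simp add: lborel_prod)
  finally show ?thesis .
qed

definition transport_integrand ::
  "(real \<Rightarrow> real) \<Rightarrow> (real \<Rightarrow> real) \<Rightarrow> (real \<Rightarrow> real) \<Rightarrow> (real \<times> real \<Rightarrow> real) \<Rightarrow> real \<times> real \<Rightarrow> real"
  where "transport_integrand v g g' \<psi> p =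
    g (snd p) * partial_t \<psi> p + g (snd p) * v (snd p) * partial_x \<psi> p + g' (snd p) * \<psi> p"

lemma continuous_on_transport_integrand:
  assumes "smooth2 \<psi>" "continuous_on UNIV v" "continuous_on UNIV g" "continuous_on UNIV g'"
  shows "continuous_on UNIV (transport_integrand v g g' \<psi>)"
proof -
  have snd: "continuous_on UNIV (\<lambda>p::real \<times> real. f (snd p))" if "continuous_on UNIV f" for f
    by (rule continuous_on_compose2[OF that continuous_on_snd]) auto
  show ?thesis
    unfolding transport_integrand_def
    by (intro continuous_intros snd assms(2-4) smooth2_continuous[OF assms(1)])
qed

lemma transport_integrand_support:
  assumes "\<And>p. R < norm p \<Longrightarrow> \<psi> p = 0" "\<And>p. R < norm p \<Longrightarrow> partial_x \<psi> p = 0"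
    "\<And>p. R < norm p \<Longrightarrow> partial_t \<psi> p = 0" and "R < norm p"
  shows "transport_integrand v g g' \<psi> p = 0"
  using assms by (simp add: transport_integrand_def)

text \<open>Along the line \<open>t \<mapsto> (y + X(t), t)\<close> the transport integrand is the derivative of
  \<open>g(t) \<psi>(y + X(t), t)\<close>, which vanishes for large \<open>t\<close>.\<close>

lemma integral_transport_integrand_along_curve:
  assumes tf: "test_fun \<psi>" and dX: "\<And>t. (X has_real_derivative v t) (at t)"
    and cv: "continuous_on UNIV v" and dg: "\<And>t. (g has_real_derivative g' t) (at t)"
    and cg': "continuous_on UNIV g'"
  shows "(\<integral>t. indicator {0..} t * transport_integrand v g g' \<psi> (y + X t, t) \<partial>lborel)
    = - g 0 * \<psi> (y + X 0, 0)"
proof -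
  have sm: "smooth2 \<psi>" by (rule test_fun_smooth2[OF tf])
  obtain R where R: "0 \<le> R" "\<And>p. R < norm p \<Longrightarrow> \<psi> p = 0"
    "\<And>p. R < norm p \<Longrightarrow> partial_x \<psi> p = 0" "\<And>p. R < norm p \<Longrightarrow> partial_t \<psi> p = 0"
    using test_fun_support[OF tf] by metis
  define K where "K t = transport_integrand v g g' \<psi> (y + X t, t)" for t
  have far: "R < norm (y + X t, t)" if "R < t" for t
    using norm_snd_le[of t "y + X t"] that by simp
  have "continuous_on UNIV (transport_integrand v g g' \<psi>)"
    by (rule continuous_on_transport_integrand[OF sm cv _ cg'])
       (rule DERIV_continuous_on, rule has_field_derivative_at_within[OF dg])
  moreover have "continuous_on UNIV (\<lambda>t. (y + X t, t))"
    using DERIV_continuous_on[OF has_field_derivative_at_within[OF dX]]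
    by (intro continuous_intros)
  ultimately have "continuous_on UNIV K"
    unfolding K_def by (rule continuous_on_compose2) auto
  then have cK: "continuous_on {0..R + 1} K" by (rule continuous_on_subset) auto
  have dK: "((\<lambda>s. g s * \<psi> (y + X s, s)) has_real_derivative K s) (at s)" for s
    by (rule DERIV_cong[OF DERIV_mult[OF dg smooth2_has_derivative_along_curve[OF sm dX]]])
       (simp add: K_def transport_integrand_def algebra_simps)
  have "(\<integral>t. indicator {0..R + 1} t *\<^sub>R K t \<partial>lborel)
      = g (R + 1) * \<psi> (y + X (R + 1), R + 1) - g 0 * \<psi> (y + X 0, 0)"
    by (rule integral_FTC_atLeastAtMost[OF _ _ cK]) (use R(1) dK in
        \<open>auto simp: has_real_derivative_iff_has_vector_derivative intro: has_vector_derivative_at_within\<close>)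
  also have "\<psi> (y + X (R + 1), R + 1) = 0" using R(2) far by simp
  finally have FTC: "(\<integral>t. indicator {0..R + 1} t *\<^sub>R K t \<partial>lborel) = - g 0 * \<psi> (y + X 0, 0)"
    by simp
  have "indicator {0..} t * K t = indicator {0..R + 1} t *\<^sub>R K t" for t
    using transport_integrand_support[OF R(2-4) far, of t v g g'] unfolding K_def
    by (cases "R + 1 < t") (auto simp: indicator_def)
  then have "(\<integral>t. indicator {0..} t * K t \<partial>lborel) = (\<integral>t. indicator {0..R + 1} t *\<^sub>R K t \<partial>lborel)"
    by presburger
  then show ?thesis using FTC by (simp add: K_def)
qed

lemma weak_transport_identity:
  assumes tf: "test_fun \<psi>" and A: "A \<in> sets borel" and "X 0 = 0"
    and dX: "\<And>t. (X has_real_derivative v t) (at t)" and cv: "continuous_on UNIV v"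
    and dg: "\<And>t. (g has_real_derivative g' t) (at t)" and cg': "continuous_on UNIV g'"
  shows "integrable lborel
      (\<lambda>p. indicator {0..} (snd p) * indicator A (fst p - X (snd p)) * transport_integrand v g g' \<psi> p)"
    and "(\<integral>p. indicator {0..} (snd p) * indicator A (fst p - X (snd p))
        * transport_integrand v g g' \<psi> p \<partial>lborel)
      = - g 0 * (LINT x|lborel. indicator A x * \<psi> (x, 0))"
proof -
  let ?H = "transport_integrand v g g' \<psi>"
  let ?F = "\<lambda>p. indicator {0..} (snd p) * indicator A (fst p - X (snd p)) * ?H p"
  let ?G = "\<lambda>p. indicator {0..} (snd p) * indicator A (fst p - 0) * ?H (fst p + X (snd p), snd p)"
  have sm: "smooth2 \<psi>" by (rule test_fun_smooth2[OF tf])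
  obtain R where R: "\<And>p. R < norm p \<Longrightarrow> \<psi> p = 0"
    "\<And>p. R < norm p \<Longrightarrow> partial_x \<psi> p = 0" "\<And>p. R < norm p \<Longrightarrow> partial_t \<psi> p = 0"
    using test_fun_support[OF tf] by metis
  have suppH: "\<And>p. R < norm p \<Longrightarrow> ?H p = 0"
    by (rule transport_integrand_support[OF R])
  have cX: "continuous_on UNIV X"
    by (rule DERIV_continuous_on, rule has_field_derivative_at_within[OF dX])
  have cH: "continuous_on UNIV ?H"
    by (rule continuous_on_transport_integrand[OF sm cv _ cg'])
       (rule DERIV_continuous_on, rule has_field_derivative_at_within[OF dg])
  show intF: "integrable lborel ?F"
    by (rule integrable_halfplane_region[where R=R, OF cH _ cX A]) (rule suppH)
  obtain R' where R': "\<And>p. 0 \<le> snd p \<Longrightarrow> R' < norm p \<Longrightarrow> ?H (fst p + X (snd p), snd p) = 0"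
    using sheared_support_bounded[where h="?H", OF cX suppH] by metis
  have "continuous_on UNIV (\<lambda>p::real \<times> real. (fst p + X (snd p), snd p))"
    by (intro continuous_intros continuous_on_compose2[OF cX]) auto
  then have "continuous_on UNIV (\<lambda>p. ?H (fst p + X (snd p), snd p))"
    by (rule continuous_on_compose2[OF cH]) auto
  then have intG: "integrable lborel ?G"
    by (rule integrable_halfplane_region[where h="\<lambda>p. ?H (fst p + X (snd p), snd p)",
        OF _ R' continuous_on_const A])
  have "integral\<^sup>L lborel ?F = integral\<^sup>L lborel ?G"
    using lborel_integral_shear[of ?F X] intF intG by simp
  also have "\<dots> = (\<integral>y. (\<integral>t. ?G (y, t) \<partial>lborel) \<partial>lborel)"
    using lborel_pair.integral_fst[of "\<lambda>y t. ?G (y, t)"] intG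
    by (simp add: lborel_prod case_prod_beta')
  also have "\<dots> = (\<integral>y. - g 0 * (indicator A y * \<psi> (y, 0)) \<partial>lborel)"
  proof (rule Bochner_Integration.integral_cong[OF refl])
    fix y
    have "(\<integral>t. ?G (y, t) \<partial>lborel)
        = (\<integral>t. indicator A y * (indicator {0..} t * ?H (y + X t, t)) \<partial>lborel)"
      by (simp add: ac_simps)
    also have "\<dots> = indicator A y * (\<integral>t. indicator {0..} t * ?H (y + X t, t) \<partial>lborel)"
      by (rule integral_mult_right_zero)
    finally show "(\<integral>t. ?G (y, t) \<partial>lborel) = - g 0 * (indicator A y * \<psi> (y, 0))"
      using integral_transport_integrand_along_curve[OF tf dX cv dg cg'] \<open>X 0 = 0\<close> by simp
  qed
  finally show "integral\<^sup>L lborel ?F = - g 0 * (LINT x|lborel. indicator A x * \<psi> (x, 0))"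
    by simp
qed

lemma droplet_constant_state_region:
  assumes tf: "test_fun \<psi>" and A: "A \<in> sets borel" and "X 0 = 0"
    and dX: "\<And>t. (X has_real_derivative w t) (at t)"
    and dw: "\<And>t. (w has_real_derivative \<mu> * (ua - w t)) (at t)"
  defines "ind \<equiv> \<lambda>p. indicator {0..} (snd p) * indicator A (fst p - X (snd p))"
  shows "integrable lborel (\<lambda>p. ind p * (partial_t \<psi> p + w (snd p) * partial_x \<psi> p))"
    and "(\<integral>p. ind p * (partial_t \<psi> p + w (snd p) * partial_x \<psi> p) \<partial>lborel)
      = - (LINT x|lborel. indicator A x * \<psi> (x, 0))"
    and "integrable lborel (\<lambda>p. ind p * (w (snd p) * partial_t \<psi> p
      + (w (snd p))\<^sup>2 * partial_x \<psi> p + \<mu> * (ua - w (snd p)) * \<psi> p))"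
    and "(\<integral>p. ind p * (w (snd p) * partial_t \<psi> p
      + (w (snd p))\<^sup>2 * partial_x \<psi> p + \<mu> * (ua - w (snd p)) * \<psi> p) \<partial>lborel)
      = - w 0 * (LINT x|lborel. indicator A x * \<psi> (x, 0))"
proof -
  have cw: "continuous_on UNIV w"
    by (rule DERIV_continuous_on, rule has_field_derivative_at_within[OF dw])
  have "continuous_on UNIV (\<lambda>t. \<mu> * (ua - w t))"
    using cw by (intro continuous_intros)
  note mass = weak_transport_identity[where g="\<lambda>_. 1" and g'="\<lambda>_. 0",
      OF tf A \<open>X 0 = 0\<close> dX cw DERIV_const continuous_on_const]
   and momentum = weak_transport_identity[OF tf A \<open>X 0 = 0\<close> dX cw dw this]
  show "integrable lborel (\<lambda>p. ind p * (partial_t \<psi> p + w (snd p) * partial_x \<psi> p))"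
    "(\<integral>p. ind p * (partial_t \<psi> p + w (snd p) * partial_x \<psi> p) \<partial>lborel)
      = - (LINT x|lborel. indicator A x * \<psi> (x, 0))"
    using mass by (simp_all add: ind_def transport_integrand_def mult.assoc)
  show "integrable lborel (\<lambda>p. ind p * (w (snd p) * partial_t \<psi> p
      + (w (snd p))\<^sup>2 * partial_x \<psi> p + \<mu> * (ua - w (snd p)) * \<psi> p))"
    "(\<integral>p. ind p * (w (snd p) * partial_t \<psi> p
      + (w (snd p))\<^sup>2 * partial_x \<psi> p + \<mu> * (ua - w (snd p)) * \<psi> p) \<partial>lborel)
      = - w 0 * (LINT x|lborel. indicator A x * \<psi> (x, 0))"
    using momentum by (simp_all add: ind_def transport_integrand_def power2_eq_square mult.assoc)
qed

lemma weak_solution_contact_vacuum_contact: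
  fixes X1 X2 ul ur :: "real \<Rightarrow> real" and ubar :: "real \<Rightarrow> real \<Rightarrow> real"
  assumes "X1 0 = 0" and dX1: "\<And>t. (X1 has_real_derivative ul t) (at t)"
    and dul: "\<And>t. (ul has_real_derivative \<mu> * (ua - ul t)) (at t)"
    and "X2 0 = 0" and dX2: "\<And>t. (X2 has_real_derivative ur t) (at t)"
    and dur: "\<And>t. (ur has_real_derivative \<mu> * (ua - ur t)) (at t)"
    and X12: "\<And>t. 0 \<le> t \<Longrightarrow> X1 t \<le> X2 t"
  shows "weak_solution \<mu> ua
           (\<lambda>x. if x < 0 then \<alpha>m else \<alpha>p)
           (\<lambda>x. if x < 0 then ul 0 else ur 0)
           (\<lambda>(x, t). if x < X1 t then \<alpha>m else if x \<le> X2 t then 0 else \<alpha>p)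
           (\<lambda>(x, t). if x < X1 t then ul t else if x \<le> X2 t then ubar x t else ur t)"
  unfolding weak_solution_def
proof (intro allI impI conjI)
  let ?\<alpha> = "(\<lambda>(x, t). if x < X1 t then \<alpha>m else if x \<le> X2 t then 0 else \<alpha>p) :: real \<times> real \<Rightarrow> real"
  let ?u = "(\<lambda>(x, t). if x < X1 t then ul t else if x \<le> X2 t then ubar x t else ur t) :: real \<times> real \<Rightarrow> real"
  let ?L = "\<lambda>p. indicator {0..} (snd p) * indicator {..<0} (fst p - X1 (snd p)) :: real"
  let ?R = "\<lambda>p. indicator {0..} (snd p) * indicator {0<..} (fst p - X2 (snd p)) :: real"
  fix \<psi> assume tf: "test_fun \<psi>"
  note left = droplet_constant_state_region[OF tf _ \<open>X1 0 = 0\<close> dX1 dul, of "{..<0}", simplified]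
  note right = droplet_constant_state_region[OF tf _ \<open>X2 0 = 0\<close> dX2 dur, of "{0<..}", simplified]
  note split_initial = integral_test_fun_initial_step[OF tf]
  have mass: "indicator (UNIV \<times> {0..}) p *\<^sub>R (?\<alpha> p * partial_t \<psi> p + ?\<alpha> p * ?u p * partial_x \<psi> p)
      = \<alpha>m * (?L p * (partial_t \<psi> p + ul (snd p) * partial_x \<psi> p))
        + \<alpha>p * (?R p * (partial_t \<psi> p + ur (snd p) * partial_x \<psi> p))" for p
    using X12[of "snd p"] by (cases p) (auto simp: indicator_def algebra_simps)
  show "set_lebesgue_integral lborel (UNIV \<times> {0..})
      (\<lambda>p. ?\<alpha> p * partial_t \<psi> p + ?\<alpha> p * ?u p * partial_x \<psi> p)
      = - (LINT x|lborel. (if x < 0 then \<alpha>m else \<alpha>p) * \<psi> (x, 0))"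
    unfolding set_lebesgue_integral_def mass split_initial using left right by simp
  have momentum: "indicator (UNIV \<times> {0..}) p *\<^sub>R (?\<alpha> p * ?u p * partial_t \<psi> p
        + ?\<alpha> p * (?u p)\<^sup>2 * partial_x \<psi> p + \<mu> * ?\<alpha> p * (ua - ?u p) * \<psi> p)
      = \<alpha>m * (?L p * (ul (snd p) * partial_t \<psi> p + (ul (snd p))\<^sup>2 * partial_x \<psi> p
          + \<mu> * (ua - ul (snd p)) * \<psi> p))
        + \<alpha>p * (?R p * (ur (snd p) * partial_t \<psi> p + (ur (snd p))\<^sup>2 * partial_x \<psi> p
          + \<mu> * (ua - ur (snd p)) * \<psi> p))" for p
    using X12[of "snd p"] by (cases p) (auto simp: indicator_def algebra_simps)
  show "set_lebesgue_integral lborel (UNIV \<times> {0..})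
      (\<lambda>p. ?\<alpha> p * ?u p * partial_t \<psi> p + ?\<alpha> p * (?u p)\<^sup>2 * partial_x \<psi> p
        + \<mu> * ?\<alpha> p * (ua - ?u p) * \<psi> p)
      = - (LINT x|lborel. (if x < 0 then \<alpha>m else \<alpha>p) * (if x < 0 then ul 0 else ur 0) * \<psi> (x, 0))"
  proof -
    have product: "(if x < 0 then \<alpha>m else \<alpha>p) * (if x < 0 then ul 0 else ur 0)
        = (if x < 0 then \<alpha>m * ul 0 else \<alpha>p * ur 0)" for x :: real
      by simp
    show ?thesis
      unfolding set_lebesgue_integral_def momentum product split_initial
      by (simp add: left right; simp add: algebra_simps)
  qed
qed

theorem mainTheorem11:
  fixes \<mu> ua \<alpha>m \<alpha>p um up :: real
  assumes "\<mu> > 0" and "\<alpha>m \<ge> 0" and "\<alpha>p \<ge> 0" and "um < up"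
  defines "ul \<equiv> \<lambda>t. ua + (um - ua) * exp (- \<mu> * t)"
      and "ur \<equiv> \<lambda>t. ua + (up - ua) * exp (- \<mu> * t)"
      and "X1 \<equiv> \<lambda>t. ua * t + (ua - um) * (exp (- \<mu> * t) - 1) / \<mu>"
      and "X2 \<equiv> \<lambda>t. ua * t + (ua - up) * (exp (- \<mu> * t) - 1) / \<mu>"
      and "ubar \<equiv> \<lambda>x t. ua + \<mu> * (x - ua * t) / (exp (\<mu> * t) - 1)"
  shows "weak_solution \<mu> ua
           (\<lambda>x. if x < 0 then \<alpha>m else \<alpha>p)
           (\<lambda>x. if x < 0 then um else up)
           (\<lambda>(x, t). if x < X1 t then \<alpha>m else if x \<le> X2 t then 0 else \<alpha>p)
           (\<lambda>(x, t). if x < X1 t then ul t else if x \<le> X2 t then ubar x t else ur t)"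
proof -
  have dX1: "(X1 has_real_derivative ul t) (at t)" and dX2: "(X2 has_real_derivative ur t) (at t)"
    and dul: "(ul has_real_derivative \<mu> * (ua - ul t)) (at t)"
    and dur: "(ur has_real_derivative \<mu> * (ua - ur t)) (at t)" for t
    unfolding X1_def X2_def ul_def ur_def using \<open>\<mu> > 0\<close>
    by (auto intro!: derivative_eq_intros simp: field_simps)
  have X12: "X1 t \<le> X2 t" if "0 \<le> t" for t
  proof -
    have "X2 t - X1 t = (up - um) * (1 - exp (- \<mu> * t)) / \<mu>"
      unfolding X1_def X2_def using \<open>\<mu> > 0\<close> by (simp add: field_simps)
    also have "\<dots> \<ge> 0" using \<open>\<mu> > 0\<close> \<open>um < up\<close> that by simp
    finally show ?thesis by simp
  qed
  have "X1 0 = 0" "X2 0 = 0" and initial: "ul 0 = um" "ur 0 = up"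
    unfolding X1_def X2_def ul_def ur_def by simp_all
  from weak_solution_contact_vacuum_contact[OF \<open>X1 0 = 0\<close> dX1 dul \<open>X2 0 = 0\<close> dX2 dur X12]
  show ?thesis unfolding initial .
qed

end
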